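(* Let $G=\langle x,y\mid x^2y^3=1\rangle$ and $C=\langle a,b\mid (ab^{-3})^2b^6=1\rangle$. Then $x\mapsto ab^{-3}$, $y\mapsto b^2$ defines an embedding $G\hookrightarrow C$; $C$ is isomorphic, via $a\mapsto a_0$, $b\mapsto b$, to $G_1=\langle a_0,a_{-1},a_{-2},b\mid a_0b=ba_{-1},\ a_{-1}b=ba_{-2},\ a_{-2}b=ba_0^{-1}\rangle$; and every element of $G_1$ has a unique representation $b^na_{i_1}^{\varepsilon_1}\cdots a_{i_m}^{\varepsilon_m}$ with $n\in\mathbb Z$, $m\ge0$, $-2\le i_j\le 0$, $\varepsilon_j=\pm1$, and no consecutive pair $a_i^{\varepsilon}a_i^{-\varepsilon}$. *)

theory Defs
  imports "HOL-Algebra.Algebra"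
begin

text \<open>A word over generators of type 'g is a list of letters (g, e); e = False
  stands for the generator g and e = True for its inverse.\<close>

type_synonym 'g word = "('g \<times> bool) list"

inductive pres_eq :: "'g word set \<Rightarrow> 'g word \<Rightarrow> 'g word \<Rightarrow> bool" for R where
  refl: "pres_eq R w w"
| sym: "pres_eq R u v \<Longrightarrow> pres_eq R v u"
| trans: "pres_eq R u v \<Longrightarrow> pres_eq R v w \<Longrightarrow> pres_eq R u w"
| cancel: "pres_eq R (u @ [(g, e), (g, \<not> e)] @ v) (u @ v)"
| relator: "r \<in> R \<Longrightarrow> pres_eq R (u @ r @ v) (u @ v)"

definition presented_group :: "'g word set \<Rightarrow> 'g word set monoid" where
  "presented_group R =
     \<lparr> carrier = UNIV // {(u, v). pres_eq R u v},
       monoid.mult = (\<lambda>P Q. {w. \<exists>x\<in>P. \<exists>y\<in>Q. pres_eq R (x @ y) w}),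
       monoid.one = {w. pres_eq R [] w} \<rparr>"

definition word_class :: "'g word set \<Rightarrow> 'g word \<Rightarrow> 'g word set" where
  "word_class R w = {v. pres_eq R w v}"

datatype genG = Gx | Gy
datatype genC = Ca | Cb
datatype genG1 = A0 | Am1 | Am2 | Bg

definition relG :: "genG word set" where
  "relG = {[(Gx, False), (Gx, False), (Gy, False), (Gy, False), (Gy, False)]}"

definition relC :: "genC word set" where
  "relC = {[(Ca, False), (Cb, True), (Cb, True), (Cb, True),
            (Ca, False), (Cb, True), (Cb, True), (Cb, True),
            (Cb, False), (Cb, False), (Cb, False), (Cb, False), (Cb, False), (Cb, False)]}"

text \<open>G1 = < a0, a_-1, a_-2, b | a0 b = b a_-1, a_-1 b = b a_-2, a_-2 b = b a0^-1 >,
  relations written as relators a0 b a_-1^-1 b^-1 etc.\<close>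
definition relG1 :: "genG1 word set" where
  "relG1 = {[(A0, False), (Bg, False), (Am1, True), (Bg, True)],
            [(Am1, False), (Bg, False), (Am2, True), (Bg, True)],
            [(Am2, False), (Bg, False), (A0, False), (Bg, True)]}"

abbreviation "grpG \<equiv> presented_group relG"
abbreviation "grpC \<equiv> presented_group relC"
abbreviation "grpG1 \<equiv> presented_group relG1"

definition letters_prod :: "genG1 word \<Rightarrow> genG1 word set" where
  "letters_prod as = foldr (\<lambda>(l, e) acc.
      (if e then inv\<^bsub>grpG1\<^esub> (word_class relG1 [(l, False)]) else word_class relG1 [(l, False)])
        \<otimes>\<^bsub>grpG1\<^esub> acc) as \<one>\<^bsub>grpG1\<^esub>"

definition normal_letters :: "genG1 word \<Rightarrow> bool" where
  "normal_letters as \<longleftrightarrow> (\<forall>le\<in>set as. fst le \<noteq> Bg) \<and>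
     (\<forall>j. Suc j < length as \<longrightarrow>
        \<not> (fst (as ! j) = fst (as ! Suc j) \<and> snd (as ! j) \<noteq> snd (as ! Suc j)))"

end

theory Submission
  imports Defs
begin

(* For G1 such a machine computes the normal form b^n a_{i_1}^{e_1} ... a_{i_m}^{e_m}: reading b
   moves b to the front through the automorphism a_0 -> a_{-1} -> a_{-2} -> a_0^{-1}, reading an
   a-letter freely reduces.  Every word rewrites to its state (existence) and the state is an
   invariant (uniqueness).
   The substitutions a -> a_0, b -> b and a_0 -> a, a_{-1} -> b^{-1} a b, a_{-2} -> b^{-2} a b^2,
   b -> b are mutually inverse homomorphisms, giving C = G1.
   Finally, x^2 is central in G, so every element of G has the form x^(2m) y^(e_k) x ... x y^(e_0)
   with middle exponents in {1,2}; computing the G1-normal form of the image of such a word shows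
   that the composite G -> C -> G1 is injective, hence so is G -> C. *)

fun letter_inv :: "'g \<times> bool \<Rightarrow> 'g \<times> bool" where
  "letter_inv (g, e) = (g, \<not> e)"

lemma letter_inv_simps [simp]:
  "letter_inv (letter_inv l) = l" "fst (letter_inv l) = fst l" "snd (letter_inv l) = (\<not> snd l)"
  "letter_inv l \<noteq> l" "l \<noteq> letter_inv l"
  by (cases l; simp)+

definition word_inv :: "'g word \<Rightarrow> 'g word" where
  "word_inv w = rev (map letter_inv w)"

lemma word_inv_simps [simp]:
  "word_inv [] = []" "word_inv (l # w) = word_inv w @ [letter_inv l]"
  "word_inv (u @ v) = word_inv v @ word_inv u" "word_inv (word_inv w) = w"
  by (simp_all add: word_inv_def rev_map o_def)

fun cons_reduce :: "'g \<times> bool \<Rightarrow> 'g word \<Rightarrow> 'g word" where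
  "cons_reduce l [] = [l]"
| "cons_reduce l (l' # w) = (if l' = letter_inv l then w else l # l' # w)"

fun free_reduce :: "'g word \<Rightarrow> 'g word" where
  "free_reduce [] = []"
| "free_reduce (l # w) = cons_reduce l (free_reduce w)"

definition freely_reduced :: "'g word \<Rightarrow> bool" where
  "freely_reduced w \<longleftrightarrow> successively (\<lambda>l l'. l' \<noteq> letter_inv l) w"

lemma freely_reduced_Cons:
  "freely_reduced (l # w) \<longleftrightarrow> freely_reduced w \<and> (w = [] \<or> hd w \<noteq> letter_inv l)"
  by (cases w) (auto simp: freely_reduced_def)

lemma freely_reduced_rev: "freely_reduced (rev w) \<longleftrightarrow> freely_reduced w"
  unfolding freely_reduced_def successively_rev
  by (rule successively_cong) (metis letter_inv_simps(1))+

lemma cons_reduce_inverse: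
  assumes "freely_reduced w"
  shows "cons_reduce (letter_inv l) (cons_reduce l w) = w"
proof (cases w)
  case (Cons l' w')
  show ?thesis
  proof (cases "l' = letter_inv l")
    case True
    then show ?thesis using Cons assms by (cases w') (auto simp: freely_reduced_Cons)
  qed (use Cons in auto)
qed simp

lemma cons_reduce_irreducible:
  "w = [] \<or> hd w \<noteq> letter_inv l \<Longrightarrow> cons_reduce l w = l # w"
  by (cases w) auto

lemma map_cons_reduce:
  assumes "\<And>l l'. f l = f l' \<longleftrightarrow> l = l'" and "\<And>l. f (letter_inv l) = letter_inv (f l)"
  shows "map f (cons_reduce l w) = cons_reduce (f l) (map f w)"
  by (cases w) (auto simp: assms[symmetric])

lemma pres_eq_refl [simp]: "pres_eq R w w"
  by (rule pres_eq.refl)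

lemmas pres_eq_sym = pres_eq.sym
lemmas pres_eq_trans [trans] = pres_eq.trans

lemma pres_eq_prefix: "pres_eq R u v \<Longrightarrow> pres_eq R (w @ u) (w @ v)"
proof (induction rule: pres_eq.induct)
  case (cancel u g e v)
  then show ?case using pres_eq.cancel[of R "w @ u" g e v] by simp
next
  case (relator r u v)
  then show ?case using pres_eq.relator[of r R "w @ u" v] by simp
qed (auto intro: pres_eq.intros)

lemma pres_eq_suffix: "pres_eq R u v \<Longrightarrow> pres_eq R (u @ w) (v @ w)"
proof (induction rule: pres_eq.induct)
  case (cancel u g e v)
  then show ?case using pres_eq.cancel[of R u g e "v @ w"] by simp
next
  case (relator r u v)
  then show ?case using pres_eq.relator[of r R u "v @ w"] by simp
qed (auto intro: pres_eq.intros)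

lemma pres_eq_append: "pres_eq R u u' \<Longrightarrow> pres_eq R v v' \<Longrightarrow> pres_eq R (u @ v) (u' @ v')"
  by (meson pres_eq_prefix pres_eq_suffix pres_eq_trans)

lemma pres_eq_cancel: "pres_eq R (u @ [l, letter_inv l] @ v) (u @ v)"
  using pres_eq.cancel[of R u "fst l" "snd l" v] by (cases l) simp

lemma pres_eq_free_reduce: "pres_eq R w (free_reduce w)"
proof (induction w)
  case (Cons l w)
  have "pres_eq R (l # w) (l # free_reduce w)" using pres_eq_prefix[OF Cons, of "[l]"] by simp
  also have "pres_eq R (l # free_reduce w) (cons_reduce l (free_reduce w))"
    using pres_eq_cancel[of R "[]" l] by (cases "free_reduce w") auto
  finally show ?case by simp
qed simp

lemma pres_eq_rev_cons_reduce: "pres_eq R (rev w @ [l]) (rev (cons_reduce l w))"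
proof (cases w)
  case (Cons l' w')
  then show ?thesis
    using pres_eq_cancel[of R "rev w'" "letter_inv l" "[]"] by auto
qed simp

lemma pres_eq_word_inv_right: "pres_eq R (w @ word_inv w) []"
proof (induction w)
  case (Cons l w)
  have "pres_eq R ([l] @ (w @ word_inv w) @ [letter_inv l]) ([l] @ [] @ [letter_inv l])"
    using Cons by (intro pres_eq_append) auto
  also have "pres_eq R \<dots> []" using pres_eq_cancel[of R "[]" l "[]"] by simp
  finally show ?case by simp
qed simp

lemma pres_eq_word_inv_left: "pres_eq R (word_inv w @ w) []"
  using pres_eq_word_inv_right[of R "word_inv w"] by simp

lemma pres_eq_relator: "r \<in> R \<Longrightarrow> pres_eq R r []"
  using pres_eq.relator[of r R "[]" "[]"] by simp

lemma pres_eq_relator_inv: "r \<in> R \<Longrightarrow> pres_eq R (word_inv r) []"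
proof -
  assume r: "r \<in> R"
  have "pres_eq R (word_inv r) (word_inv r @ r)"
    using pres_eq.relator[OF r, of "word_inv r" "[]"] by (simp add: pres_eq_sym)
  also have "pres_eq R \<dots> []" by (rule pres_eq_word_inv_left)
  finally show ?thesis .
qed

lemma pres_eq_word_inv: "pres_eq R u v \<Longrightarrow> pres_eq R (word_inv u) (word_inv v)"
proof -
  assume uv: "pres_eq R u v"
  have "pres_eq R (word_inv u) (word_inv u @ v @ word_inv v)"
    using pres_eq_prefix[OF pres_eq_word_inv_right[of R v], of "word_inv u"] by (simp add: pres_eq_sym)
  also have "pres_eq R \<dots> (word_inv u @ u @ word_inv v)"
    using pres_eq_sym[OF uv] by (intro pres_eq_append) auto
  also have "\<dots> = (word_inv u @ u) @ word_inv v" by simp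
  also have "pres_eq R \<dots> ([] @ word_inv v)"
    by (intro pres_eq_suffix pres_eq_word_inv_left)
  finally show ?thesis by simp
qed

text \<open>Two words are equal when u v^{-1} freely reduces to a product of conjugates c r^{\<pm>1} c^{-1}
  of relators; the list of triples (c, inverted, r) serves as a checkable certificate.\<close>

definition conj_relator :: "'g word \<times> bool \<times> 'g word \<Rightarrow> 'g word" where
  "conj_relator t = (case t of (c, e, r) \<Rightarrow> c @ (if e then word_inv r else r) @ word_inv c)"

lemma pres_eq_conj_relators:
  assumes "\<forall>(c, e, r) \<in> set L. r \<in> R"
  shows "pres_eq R (concat (map conj_relator L)) []"
  using assms
proof (induction L)
  case (Cons t L)
  obtain c e r where t: "t = (c, e, r)" by (cases t)
  then have "pres_eq R (if e then word_inv r else r) []"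
    using Cons.prems pres_eq_relator pres_eq_relator_inv by auto
  then have "pres_eq R (c @ (if e then word_inv r else r) @ word_inv c) (c @ [] @ word_inv c)"
    by (intro pres_eq_append) auto
  also have "pres_eq R \<dots> []" using pres_eq_word_inv_right by simp
  finally have "pres_eq R (conj_relator t) []" by (simp add: conj_relator_def t)
  then have "pres_eq R (conj_relator t @ concat (map conj_relator L)) ([] @ [])"
    using Cons by (intro pres_eq_append) auto
  then show ?case by simp
qed simp

lemma pres_eq_by_certificate:
  assumes "free_reduce (u @ word_inv v) = free_reduce (concat (map conj_relator L))"
    and "\<forall>(c, e, r) \<in> set L. r \<in> R"
  shows "pres_eq R u v"
proof -
  have "pres_eq R u ((u @ word_inv v) @ v)"
    using pres_eq_prefix[OF pres_eq_word_inv_left[of R v], of u] by (simp add: pres_eq_sym)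
  also have "pres_eq R (u @ word_inv v) []"
  proof -
    have "pres_eq R (u @ word_inv v) (free_reduce (u @ word_inv v))" by (rule pres_eq_free_reduce)
    also have "pres_eq R \<dots> (concat (map conj_relator L))"
      unfolding assms(1) by (rule pres_eq_sym, rule pres_eq_free_reduce)
    also have "pres_eq R \<dots> []" by (rule pres_eq_conj_relators[OF assms(2)])
    finally show ?thesis .
  qed
  then have "pres_eq R ((u @ word_inv v) @ v) ([] @ v)" by (rule pres_eq_suffix)
  finally show ?thesis by simp
qed

lemma pres_eq_free: "free_reduce (u @ word_inv v) = [] \<Longrightarrow> pres_eq R u v"
  using pres_eq_by_certificate[of u v "[]"] by simp

lemma pres_eq_swap_by_relator:
  assumes "[p, q, letter_inv p', letter_inv q'] \<in> R"
  shows "pres_eq R [p, q] [q', p']"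
proof -
  have "pres_eq R ([p, q, letter_inv p'] @ [letter_inv q', q'] @ [p']) ([p, q, letter_inv p'] @ [p'])"
    using pres_eq_cancel[of R "[p, q, letter_inv p']" "letter_inv q'" "[p']"] by simp
  also have "pres_eq R \<dots> ([p, q] @ [letter_inv p', p'] @ [])"
    by simp
  also have "pres_eq R \<dots> [p, q]"
    using pres_eq_cancel[of R "[p, q]" "letter_inv p'" "[]"] by simp
  finally have "pres_eq R [p, q] ([] @ [p, q, letter_inv p', letter_inv q'] @ [q', p'])"
    by (simp add: pres_eq_sym)
  also have "pres_eq R \<dots> ([] @ [q', p'])" by (rule pres_eq.relator[OF assms])
  finally show ?thesis by simp
qed

lemma pres_eq_swap_inv_left:
  assumes "pres_eq R [p, q] [q', p']"
  shows "pres_eq R [letter_inv p, q'] [q, letter_inv p']"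
proof -
  have "pres_eq R [letter_inv p, q'] ([letter_inv p, q'] @ [p', letter_inv p'] @ [])"
    using pres_eq_cancel[of R "[letter_inv p, q']" p' "[]"] by (simp add: pres_eq_sym)
  also have "pres_eq R \<dots> ([letter_inv p] @ [p, q] @ [letter_inv p'])"
    using pres_eq_prefix[OF pres_eq_suffix[OF pres_eq_sym[OF assms], of "[letter_inv p']"],
        of "[letter_inv p]"] by simp
  also have "pres_eq R \<dots> ([] @ [letter_inv p, letter_inv (letter_inv p)] @ [q, letter_inv p'])"
    by simp
  also have "pres_eq R \<dots> [q, letter_inv p']"
    using pres_eq_cancel[of R "[]" "letter_inv p" "[q, letter_inv p']"] by simp
  finally show ?thesis .
qed

lemma pres_eq_swap_inv_right:
  assumes "pres_eq R [p, q] [q', p']"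
  shows "pres_eq R [letter_inv q', p] [p', letter_inv q]"
proof -
  have "pres_eq R [letter_inv q', p] ([letter_inv q', p] @ [q, letter_inv q] @ [])"
    using pres_eq_cancel[of R "[letter_inv q', p]" q "[]"] by (simp add: pres_eq_sym)
  also have "pres_eq R \<dots> ([letter_inv q'] @ [q', p'] @ [letter_inv q])"
    using pres_eq_prefix[OF pres_eq_suffix[OF assms, of "[letter_inv q]"], of "[letter_inv q']"]
    by simp
  also have "pres_eq R \<dots> ([] @ [letter_inv q', letter_inv (letter_inv q')] @ [p', letter_inv q])"
    by simp
  also have "pres_eq R \<dots> [p', letter_inv q]"
    using pres_eq_cancel[of R "[]" "letter_inv q'" "[p', letter_inv q]"] by simp
  finally show ?thesis .
qed

lemma pres_eq_move_past:
  assumes "\<And>l. l \<in> set w \<Longrightarrow> pres_eq R (l # z) (z @ f l)"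
  shows "pres_eq R (w @ z) (z @ concat (map f w))"
  using assms
proof (induction w)
  case (Cons l w)
  have "pres_eq R ((l # w) @ z) (l # z @ concat (map f w))"
    using pres_eq_prefix[OF Cons.IH, of "[l]"] Cons.prems by simp
  also have "pres_eq R \<dots> (z @ concat (map f (l # w)))"
    using pres_eq_suffix[OF Cons.prems[of l], of "concat (map f w)"] by simp
  finally show ?case .
qed simp

lemma pres_eq_commute_inv:
  assumes "pres_eq R (u @ z) (z @ u)"
  shows "pres_eq R (word_inv u @ z) (z @ word_inv u)"
proof -
  have "pres_eq R (word_inv u @ z) (word_inv u @ (z @ u) @ word_inv u)"
    using pres_eq_prefix[OF pres_eq_word_inv_right[of R u], of "word_inv u @ z"]
    by (simp add: pres_eq_sym)
  also have "pres_eq R \<dots> (word_inv u @ (u @ z) @ word_inv u)"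
    using pres_eq_prefix[OF pres_eq_suffix[OF pres_eq_sym[OF assms], of "word_inv u"], of "word_inv u"]
    by simp
  also have "\<dots> = (word_inv u @ u) @ z @ word_inv u" by simp
  also have "pres_eq R \<dots> ([] @ z @ word_inv u)"
    by (intro pres_eq_suffix pres_eq_word_inv_left)
  finally show ?thesis by simp
qed

lemma word_class_eq: "word_class R u = word_class R v \<longleftrightarrow> pres_eq R u v"
proof
  assume "word_class R u = word_class R v"
  then show "pres_eq R u v" by (auto simp: word_class_def)
next
  assume "pres_eq R u v"
  then show "word_class R u = word_class R v"
    by (auto simp: word_class_def intro: pres_eq_trans pres_eq_sym)
qed

lemma word_class_carrier [simp]: "word_class R w \<in> carrier (presented_group R)"
  by (auto simp: presented_group_def quotient_def word_class_def)

lemma carrier_presented_group_cases: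
  assumes "P \<in> carrier (presented_group R)"
  obtains w where "P = word_class R w"
  using assms by (auto simp: presented_group_def quotient_def word_class_def)

lemma word_class_mult [simp]:
  "word_class R u \<otimes>\<^bsub>presented_group R\<^esub> word_class R v = word_class R (u @ v)"
  unfolding presented_group_def word_class_def
  by (auto intro: pres_eq_refl pres_eq_trans pres_eq_append pres_eq_sym)

lemma word_class_one: "\<one>\<^bsub>presented_group R\<^esub> = word_class R []"
  by (simp add: presented_group_def word_class_def)

lemma group_presented_group: "group (presented_group R)"
proof (rule groupI)
  fix x
  assume "x \<in> carrier (presented_group R)"
  then obtain w where w: "x = word_class R w" by (rule carrier_presented_group_cases)
  have "word_class R (word_inv w) \<otimes>\<^bsub>presented_group R\<^esub> x = \<one>\<^bsub>presented_group R\<^esub>"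
    using w pres_eq_word_inv_left by (simp add: word_class_one word_class_eq)
  then show "\<exists>y\<in>carrier (presented_group R). y \<otimes>\<^bsub>presented_group R\<^esub> x = \<one>\<^bsub>presented_group R\<^esub>"
    by auto
qed (auto elim!: carrier_presented_group_cases simp: word_class_one)

lemma word_class_inv:
  "inv\<^bsub>presented_group R\<^esub> (word_class R w) = word_class R (word_inv w)"
proof -
  interpret group "presented_group R" by (rule group_presented_group)
  show ?thesis
    by (rule inv_equality) (simp_all add: word_class_one word_class_eq pres_eq_word_inv_left)
qed

definition letter_power :: "'g \<Rightarrow> int \<Rightarrow> 'g word" where
  "letter_power g n =
     (if 0 \<le> n then replicate (nat n) (g, False) else replicate (nat (- n)) (g, True))"

lemma word_class_int_pow:
  "word_class R [(g, False)] [^]\<^bsub>presented_group R\<^esub> (n::int) = word_class R (letter_power g n)"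
proof -
  have nat_pow: "word_class R [l] [^]\<^bsub>presented_group R\<^esub> (k::nat) = word_class R (replicate k l)"
    for l k by (induction k) (simp_all add: word_class_one replicate_append_same)
  show ?thesis
    by (simp add: int_pow_def2 nat_pow word_class_inv letter_power_def word_inv_def)
qed

lemma letter_power_succ: "pres_eq R (letter_power g n @ [(g, False)]) (letter_power g (n + 1))"
proof (cases "0 \<le> n")
  case True
  then have "nat (n + 1) = Suc (nat n)" by simp
  then show ?thesis using True by (simp add: letter_power_def replicate_append_same)
next
  case False
  define k where "k = nat (- n - 1)"
  have k: "nat (- n) = Suc k" "nat (- (n + 1)) = k" using False by (simp_all add: k_def)
  have "letter_power g n @ [(g, False)] = replicate k (g, True) @ [(g, True), letter_inv (g, True)] @ []"
    using False k by (simp add: letter_power_def replicate_append_same[symmetric])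
  also have "pres_eq R \<dots> (replicate k (g, True) @ [])" by (rule pres_eq_cancel)
  also have "\<dots> = letter_power g (n + 1)" using False k by (auto simp: letter_power_def)
  finally show ?thesis .
qed

lemma letter_power_pred: "pres_eq R (letter_power g n @ [(g, True)]) (letter_power g (n - 1))"
proof (cases "0 < n")
  case False
  then have "nat (- (n - 1)) = Suc (nat (- n))" by simp
  then show ?thesis using False by (simp add: letter_power_def replicate_append_same)
next
  case True
  define k where "k = nat (n - 1)"
  have k: "nat n = Suc k" "nat (n - 1) = k" using True by (simp_all add: k_def)
  have "letter_power g n @ [(g, True)] = replicate k (g, False) @ [(g, False), letter_inv (g, False)] @ []"
    using True k by (simp add: letter_power_def replicate_append_same[symmetric])
  also have "pres_eq R \<dots> (replicate k (g, False) @ [])" by (rule pres_eq_cancel)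
  also have "\<dots> = letter_power g (n - 1)" using True k by (auto simp: letter_power_def)
  finally show ?thesis .
qed

lemma letter_power_append:
  "pres_eq R (letter_power g n @ replicate k (g, False)) (letter_power g (n + int k))"
  "pres_eq R (letter_power g n @ replicate k (g, True)) (letter_power g (n - int k))"
proof (induction k)
  case (Suc k)
  have "pres_eq R ((letter_power g n @ replicate k (g, False)) @ [(g, False)])
      (letter_power g (n + int k) @ [(g, False)])"
    using Suc.IH(1) by (rule pres_eq_suffix)
  also have "pres_eq R \<dots> (letter_power g (n + int k + 1))" by (rule letter_power_succ)
  moreover have "pres_eq R ((letter_power g n @ replicate k (g, True)) @ [(g, True)])
      (letter_power g (n - int k) @ [(g, True)])"
    using Suc.IH(2) by (rule pres_eq_suffix)
  moreover have "pres_eq R \<dots> (letter_power g (n - int k - 1))" by (rule letter_power_pred)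
  ultimately show "pres_eq R (letter_power g n @ replicate (Suc k) (g, False)) (letter_power g (n + int (Suc k)))"
    "pres_eq R (letter_power g n @ replicate (Suc k) (g, True)) (letter_power g (n - int (Suc k)))"
    by (auto simp: replicate_append_same[symmetric] algebra_simps intro: pres_eq_trans)
qed simp_all

section \<open>Homomorphisms induced by substitutions\<close>

definition subst_letter :: "('g \<Rightarrow> 'h word) \<Rightarrow> 'g \<times> bool \<Rightarrow> 'h word" where
  "subst_letter f l = (if snd l then word_inv (f (fst l)) else f (fst l))"

definition subst_word :: "('g \<Rightarrow> 'h word) \<Rightarrow> 'g word \<Rightarrow> 'h word" where
  "subst_word f w = concat (map (subst_letter f) w)"

lemma subst_word_simps [simp]:
  "subst_word f [] = []" "subst_word f (l # w) = subst_letter f l @ subst_word f w"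
  "subst_word f (u @ v) = subst_word f u @ subst_word f v"
  by (simp_all add: subst_word_def)

lemma subst_letter_inv: "subst_letter f (letter_inv l) = word_inv (subst_letter f l)"
  by (simp add: subst_letter_def)

lemma subst_word_inv: "subst_word f (word_inv w) = word_inv (subst_word f w)"
  by (induction w) (simp_all add: subst_letter_inv)

lemma subst_word_subst_word:
  "subst_word f (subst_word g w) = subst_word (\<lambda>x. subst_word f (g x)) w"
  by (induction w) (simp_all add: subst_letter_def subst_word_inv)

lemma pres_eq_subst_word:
  assumes rel: "\<forall>r\<in>R. pres_eq S (subst_word f r) []"
  shows "pres_eq R u v \<Longrightarrow> pres_eq S (subst_word f u) (subst_word f v)"
proof (induction rule: pres_eq.induct)
  case (cancel u g e v)
  have "subst_word f (u @ [(g, e), (g, \<not> e)] @ v) =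
      subst_word f u @ (subst_letter f (g, e) @ word_inv (subst_letter f (g, e))) @ subst_word f v"
    using subst_letter_inv[of f "(g, e)"] by simp
  also have "pres_eq S \<dots> (subst_word f u @ [] @ subst_word f v)"
    by (intro pres_eq_append pres_eq_word_inv_right) auto
  finally show ?case by simp
next
  case (relator r u v)
  have "pres_eq S (subst_word f u @ subst_word f r @ subst_word f v) (subst_word f u @ [] @ subst_word f v)"
    using rel relator by (intro pres_eq_append) auto
  then show ?case by simp
qed (auto intro: pres_eq.intros)

text \<open>Von Dyck: a substitution killing all relators of R induces a homomorphism; on a class it
  substitutes into an arbitrary representative.\<close>

definition induced_hom :: "'g word set \<Rightarrow> 'h word set \<Rightarrow> ('g \<Rightarrow> 'h word) \<Rightarrow> 'g word set \<Rightarrow> 'h word set"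
  where "induced_hom R S f P = word_class S (subst_word f (SOME w. w \<in> P))"

lemma induced_hom_word_class:
  assumes "\<forall>r\<in>R. pres_eq S (subst_word f r) []"
  shows "induced_hom R S f (word_class R u) = word_class S (subst_word f u)"
proof -
  have "u \<in> word_class R u" by (simp add: word_class_def)
  then have "(SOME w. w \<in> word_class R u) \<in> word_class R u" by (rule someI)
  then have "pres_eq R u (SOME w. w \<in> word_class R u)" by (simp add: word_class_def)
  then have "pres_eq S (subst_word f u) (subst_word f (SOME w. w \<in> word_class R u))"
    by (rule pres_eq_subst_word[OF assms])
  then show ?thesis unfolding induced_hom_def by (simp add: word_class_eq pres_eq_sym)
qed

lemma induced_hom_hom:
  assumes "\<forall>r\<in>R. pres_eq S (subst_word f r) []"
  shows "induced_hom R S f \<in> hom (presented_group R) (presented_group S)"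
  unfolding hom_def
  by (auto elim!: carrier_presented_group_cases simp: induced_hom_word_class[OF assms])

lemma pres_eq_subst_word_id:
  assumes "\<And>g. pres_eq R (f g) [(g, False)]"
  shows "pres_eq R (subst_word f w) w"
proof (induction w)
  case (Cons l w)
  have "pres_eq R (subst_letter f l) [l]"
    using assms[of "fst l"] pres_eq_word_inv[OF assms[of "fst l"]]
    by (cases l) (auto simp: subst_letter_def)
  then show ?case using Cons pres_eq_append[of R _ "[l]"] by simp
qed simp

lemma induced_hom_iso:
  assumes rel_f: "\<forall>r\<in>R. pres_eq S (subst_word f r) []"
    and rel_g: "\<forall>r\<in>S. pres_eq R (subst_word g r) []"
    and gf: "\<And>x. pres_eq R (subst_word g (f x)) [(x, False)]"
    and fg: "\<And>y. pres_eq S (subst_word f (g y)) [(y, False)]"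
  shows "induced_hom R S f \<in> iso (presented_group R) (presented_group S)"
proof -
  have hom_f: "induced_hom R S f \<in> hom (presented_group R) (presented_group S)"
    and hom_g: "induced_hom S R g \<in> hom (presented_group S) (presented_group R)"
    using induced_hom_hom rel_f rel_g by blast+
  have "bij_betw (induced_hom R S f) (carrier (presented_group R)) (carrier (presented_group S))"
  proof (rule bij_betw_byWitness[where f' = "induced_hom S R g"])
    show "\<forall>P\<in>carrier (presented_group R). induced_hom S R g (induced_hom R S f P) = P"
    proof
      fix P
      assume "P \<in> carrier (presented_group R)"
      then obtain w where "P = word_class R w" by (rule carrier_presented_group_cases)
      then show "induced_hom S R g (induced_hom R S f P) = P"
        using pres_eq_subst_word_id[OF gf, of w]
        by (simp add: induced_hom_word_class rel_f rel_g subst_word_subst_word word_class_eq)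
    qed
    show "\<forall>P\<in>carrier (presented_group S). induced_hom R S f (induced_hom S R g P) = P"
    proof
      fix P
      assume "P \<in> carrier (presented_group S)"
      then obtain w where "P = word_class S w" by (rule carrier_presented_group_cases)
      then show "induced_hom R S f (induced_hom S R g P) = P"
        using pres_eq_subst_word_id[OF fg, of w]
        by (simp add: induced_hom_word_class rel_f rel_g subst_word_subst_word word_class_eq)
    qed
  qed (use hom_f hom_g in \<open>auto simp: hom_def\<close>)
  then show ?thesis using hom_f by (simp add: iso_def)
qed

section \<open>Invariants given by actions on states\<close>

lemma fold_invariant:
  fixes step :: "'s \<Rightarrow> 'g \<times> bool \<Rightarrow> 's"
  assumes pres: "\<And>s l. P s \<Longrightarrow> P (step s l)"
    and undo: "\<And>s l. P s \<Longrightarrow> step (step s l) (letter_inv l) = s"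
    and rel: "\<And>s r. P s \<Longrightarrow> r \<in> R \<Longrightarrow> foldl step s r = s"
  shows "pres_eq R u v \<Longrightarrow> P s \<Longrightarrow> foldl step s u = foldl step s v"
proof (induction arbitrary: s rule: pres_eq.induct)
  case (cancel u g e v)
  have "P (foldl step s u)" using cancel.prems by (induction u arbitrary: s) (auto simp: pres)
  from undo[OF this, of "(g, e)"] show ?case by simp
next
  case (relator r u v)
  have "P (foldl step s u)" using relator.prems by (induction u arbitrary: s) (auto simp: pres)
  from rel[OF this relator(1)] show ?case by simp
qed auto

section \<open>The normal form in G1\<close>

text \<open>Conjugation by b: the relations say a b = b (shift a), where shift maps
  a_0 \<mapsto> a_{-1} \<mapsto> a_{-2} \<mapsto> a_0^{-1} (and fixes b); unshift is its inverse.\<close>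

fun shift :: "genG1 \<times> bool \<Rightarrow> genG1 \<times> bool" where
  "shift (A0, e) = (Am1, e)"
| "shift (Am1, e) = (Am2, e)"
| "shift (Am2, e) = (A0, \<not> e)"
| "shift (Bg, e) = (Bg, e)"

fun unshift :: "genG1 \<times> bool \<Rightarrow> genG1 \<times> bool" where
  "unshift (A0, e) = (Am2, \<not> e)"
| "unshift (Am1, e) = (A0, e)"
| "unshift (Am2, e) = (Am1, e)"
| "unshift (Bg, e) = (Bg, e)"

lemma genG1_letter_cases:
  obtains (A0) e where "l = (A0, e)" | (Am1) e where "l = (Am1, e)"
    | (Am2) e where "l = (Am2, e)" | (Bg) e where "l = (Bg, e)"
  by (metis genG1.exhaust surj_pair)

lemma shift_simps [simp]:
  "shift (unshift l) = l" "unshift (shift l) = l"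
  "shift (letter_inv l) = letter_inv (shift l)" "unshift (letter_inv l) = letter_inv (unshift l)"
  "fst (shift l) = Bg \<longleftrightarrow> fst l = Bg" "fst (unshift l) = Bg \<longleftrightarrow> fst l = Bg"
  by (cases l rule: genG1_letter_cases; simp)+

lemma shift_comp [simp]: "shift \<circ> unshift = id" "unshift \<circ> shift = id"
  by (simp_all add: fun_eq_iff)

lemma shift_inj [simp]: "shift l = shift l' \<longleftrightarrow> l = l'" "unshift l = unshift l' \<longleftrightarrow> l = l'"
  by (metis shift_simps(1,2))+

definition a_word :: "genG1 word \<Rightarrow> bool" where
  "a_word w \<longleftrightarrow> (\<forall>l\<in>set w. fst l \<noteq> Bg)"

definition reduced_a_word :: "genG1 word \<Rightarrow> bool" where
  "reduced_a_word w \<longleftrightarrow> a_word w \<and> freely_reduced w"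

lemma reduced_a_word_shift:
  "reduced_a_word w \<Longrightarrow> reduced_a_word (map shift w)"
  "reduced_a_word w \<Longrightarrow> reduced_a_word (map unshift w)"
  by (auto simp: reduced_a_word_def a_word_def freely_reduced_def successively_map
      shift_simps(3,4)[symmetric] simp del: shift_simps(3,4))

lemma reduced_a_word_cons_reduce:
  "reduced_a_word w \<Longrightarrow> fst l \<noteq> Bg \<Longrightarrow> reduced_a_word (cons_reduce l w)"
  by (cases w) (auto simp: reduced_a_word_def a_word_def freely_reduced_Cons)

lemma map_shift_cons_reduce:
  "map shift (cons_reduce l w) = cons_reduce (shift l) (map shift w)"
  "map unshift (cons_reduce l w) = cons_reduce (unshift l) (map unshift w)"
  by (rule map_cons_reduce; simp)+

lemma b_relation:
  "a \<noteq> Bg \<Longrightarrow> pres_eq relG1 [(a, False), (Bg, False)] [(Bg, False), shift (a, False)]"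
  by (cases a) (auto intro!: pres_eq_swap_by_relator simp: relG1_def)

lemma b_commute: "fst l \<noteq> Bg \<Longrightarrow> pres_eq relG1 [l, (Bg, False)] [(Bg, False), shift l]"
proof (cases l)
  case (Pair a e)
  moreover assume "fst l \<noteq> Bg"
  ultimately show ?thesis
    using b_relation[of a] pres_eq_swap_inv_left[OF b_relation[of a]] shift_simps(3)[of "(a, False)"]
    by (cases e) auto
qed

lemma b_inv_commute: "fst l \<noteq> Bg \<Longrightarrow> pres_eq relG1 [l, (Bg, True)] [(Bg, True), unshift l]"
  using pres_eq_swap_inv_right[OF b_commute[of "unshift l"]] by (simp add: pres_eq_sym)

lemma b_commute_word:
  "a_word w \<Longrightarrow> pres_eq relG1 (w @ [(Bg, False)]) ((Bg, False) # map shift w)"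
  "a_word w \<Longrightarrow> pres_eq relG1 (w @ [(Bg, True)]) ((Bg, True) # map unshift w)"
  using pres_eq_move_past[of w relG1 "[(Bg, False)]" "\<lambda>l. [shift l]"]
    pres_eq_move_past[of w relG1 "[(Bg, True)]" "\<lambda>l. [unshift l]"]
  by (auto simp: a_word_def b_commute b_inv_commute)

text \<open>The normal-form automaton.  A state (n, r) with r a reduced a-word stands for b^n (rev r);
  reading b pushes it to the front, reading an a-letter reduces freely.\<close>

fun nf_step :: "int \<times> genG1 word \<Rightarrow> genG1 \<times> bool \<Rightarrow> int \<times> genG1 word" where
  "nf_step (n, r) (Bg, e) = (if e then (n - 1, map unshift r) else (n + 1, map shift r))"
| "nf_step (n, r) l = (n, cons_reduce l r)"

definition nf_word :: "int \<times> genG1 word \<Rightarrow> genG1 word" where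
  "nf_word s = letter_power Bg (fst s) @ rev (snd s)"

definition nf_state :: "genG1 word \<Rightarrow> int \<times> genG1 word" where
  "nf_state w = foldl nf_step (0, []) w"

lemma reduced_a_word_nf_step: "reduced_a_word (snd s) \<Longrightarrow> reduced_a_word (snd (nf_step s l))"
  by (cases s, cases l rule: genG1_letter_cases)
    (auto simp: reduced_a_word_shift reduced_a_word_cons_reduce)

lemma nf_step_cancel: "reduced_a_word (snd s) \<Longrightarrow> nf_step (nf_step s l) (letter_inv l) = s"
  by (cases s, cases l rule: genG1_letter_cases)
    (auto simp: reduced_a_word_def cons_reduce_inverse[of _ "(_, _)", simplified])

lemma nf_step_relator:
  assumes "reduced_a_word (snd s)" and "r \<in> relG1"
  shows "foldl nf_step s r = s"
proof -
  obtain n w where s: "s = (n, w)" by (cases s)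
  then have reduced: "freely_reduced (map shift w)"
    using reduced_a_word_shift(1) assms(1) by (simp add: reduced_a_word_def)
  have "cons_reduce (a, True) (cons_reduce (a, False) (map shift w)) = map shift w"
    "cons_reduce (a, False) (cons_reduce (a, True) (map shift w)) = map shift w" for a
    using cons_reduce_inverse[OF reduced, of "(a, False)"] cons_reduce_inverse[OF reduced, of "(a, True)"]
    by simp_all
  then show ?thesis using assms(2) s by (auto simp: relG1_def map_shift_cons_reduce)
qed

lemma nf_step_a_letter: "fst l \<noteq> Bg \<Longrightarrow> nf_step (n, r) l = (n, cons_reduce l r)"
  by (cases l rule: genG1_letter_cases) auto

lemma nf_step_sound:
  assumes "reduced_a_word (snd s)"
  shows "pres_eq relG1 (nf_word s @ [l]) (nf_word (nf_step s l))"
proof -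
  obtain n r where s: "s = (n, r)" by (cases s)
  have a_word: "a_word (rev r)" using assms s by (simp add: reduced_a_word_def a_word_def)
  consider (b) "l = (Bg, False)" | (b_inv) "l = (Bg, True)" | (a) "fst l \<noteq> Bg"
    by (metis prod.collapse)
  then show ?thesis
  proof cases
    case b
    have "pres_eq relG1 (letter_power Bg n @ rev r @ [l]) (letter_power Bg n @ (Bg, False) # map shift (rev r))"
      unfolding b by (intro pres_eq_prefix b_commute_word(1)[OF a_word])
    also have "\<dots> = (letter_power Bg n @ [(Bg, False)]) @ rev (map shift r)"
      by (simp add: rev_map)
    also have "pres_eq relG1 \<dots> (letter_power Bg (n + 1) @ rev (map shift r))"
      by (intro pres_eq_suffix letter_power_succ)
    finally show ?thesis using s b by (simp add: nf_word_def rev_map)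
  next
    case b_inv
    have "pres_eq relG1 (letter_power Bg n @ rev r @ [l]) (letter_power Bg n @ (Bg, True) # map unshift (rev r))"
      unfolding b_inv by (intro pres_eq_prefix b_commute_word(2)[OF a_word])
    also have "\<dots> = (letter_power Bg n @ [(Bg, True)]) @ rev (map unshift r)"
      by (simp add: rev_map)
    also have "pres_eq relG1 \<dots> (letter_power Bg (n - 1) @ rev (map unshift r))"
      by (intro pres_eq_suffix letter_power_pred)
    finally show ?thesis using s b_inv by (simp add: nf_word_def rev_map)
  next
    case a
    then show ?thesis
      using s pres_eq_prefix[OF pres_eq_rev_cons_reduce[of relG1 r l], of "letter_power Bg n"]
      by (simp add: nf_word_def nf_step_a_letter)
  qed
qed

lemma nf_state_sound: "pres_eq relG1 w (nf_word (nf_state w)) \<and> reduced_a_word (snd (nf_state w))"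
proof (induction w rule: rev_induct)
  case Nil
  then show ?case by (simp add: nf_state_def nf_word_def letter_power_def reduced_a_word_def
        a_word_def freely_reduced_def)
next
  case (snoc l w)
  have "pres_eq relG1 (w @ [l]) (nf_word (nf_state w) @ [l])"
    using snoc by (intro pres_eq_suffix) auto
  also have "pres_eq relG1 \<dots> (nf_word (nf_step (nf_state w) l))"
    using snoc nf_step_sound by blast
  finally show ?case using snoc reduced_a_word_nf_step by (simp add: nf_state_def)
qed

lemma nf_state_invariant: "pres_eq relG1 u v \<Longrightarrow> nf_state u = nf_state v"
  unfolding nf_state_def
  by (rule fold_invariant[where P = "\<lambda>s. reduced_a_word (snd s)",
        OF reduced_a_word_nf_step nf_step_cancel nf_step_relator])
    (auto simp: reduced_a_word_def a_word_def freely_reduced_def)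

lemma pres_eq_G1_iff: "pres_eq relG1 u v \<longleftrightarrow> nf_state u = nf_state v"
  by (metis nf_state_invariant nf_state_sound pres_eq_sym pres_eq_trans)

lemma nf_state_nf_word:
  assumes "reduced_a_word r"
  shows "nf_state (nf_word (n, r)) = (n, r)"
proof -
  have power: "foldl nf_step (m, []) (letter_power Bg n) = (m + n, [])" for m
  proof -
    have "foldl nf_step (m, []) (replicate k (Bg, e)) = (if e then m - int k else m + int k, [])"
      for k m e by (induction k arbitrary: m) auto
    then show ?thesis by (simp add: letter_power_def)
  qed
  have "foldl nf_step (n, []) (rev r) = (n, r)"
    using assms
  proof (induction r)
    case (Cons l r)
    then have "reduced_a_word r" "fst l \<noteq> Bg" "r = [] \<or> hd r \<noteq> letter_inv l"
      by (auto simp: reduced_a_word_def a_word_def freely_reduced_Cons)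
    then show ?case using Cons.IH by (simp add: nf_step_a_letter cons_reduce_irreducible)
  qed simp
  then show ?thesis using power[of 0] by (simp add: nf_state_def nf_word_def)
qed

lemma normal_letters_iff: "normal_letters as \<longleftrightarrow> reduced_a_word (rev as)"
proof -
  have "l = letter_inv l' \<longleftrightarrow> fst l = fst l' \<and> snd l \<noteq> snd l'" for l l' :: "genG1 \<times> bool"
    by (cases l; cases l') auto
  then show ?thesis
    unfolding normal_letters_def reduced_a_word_def a_word_def freely_reduced_rev
    by (auto simp: freely_reduced_def successively_conv_nth)
qed

lemma letters_prod_word_class: "letters_prod as = word_class relG1 as"
proof (induction as)
  case Nil
  then show ?case by (simp add: letters_prod_def word_class_one)
next
  case (Cons l as)
  obtain a e where l: "l = (a, e)" by (cases l)
  have "letters_prod (l # as) = word_class relG1 [(a, e)] \<otimes>\<^bsub>grpG1\<^esub> letters_prod as"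
    by (cases e) (simp_all add: l letters_prod_def word_class_inv del: word_class_mult)
  then show ?case using Cons.IH by (simp add: l)
qed

theorem G1_normal_form:
  assumes "g \<in> carrier grpG1"
  shows "\<exists>!(n, as). normal_letters as \<and>
    g = (word_class relG1 [(Bg, False)]) [^]\<^bsub>grpG1\<^esub> (n::int) \<otimes>\<^bsub>grpG1\<^esub> letters_prod as"
proof -
  obtain w where g: "g = word_class relG1 w"
    using assms by (rule carrier_presented_group_cases)
  have represents: "g = (word_class relG1 [(Bg, False)]) [^]\<^bsub>grpG1\<^esub> n \<otimes>\<^bsub>grpG1\<^esub> letters_prod as
      \<longleftrightarrow> nf_state w = nf_state (nf_word (n, rev as))" for n as
    by (simp add: g word_class_int_pow letters_prod_word_class word_class_eq pres_eq_G1_iff nf_word_def)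
  obtain n r where state: "nf_state w = (n, r)" by (cases "nf_state w")
  then have "reduced_a_word r" using nf_state_sound[of w] by simp
  then show ?thesis
    by (intro ex1I[of _ "(n, rev r)"])
      (auto simp: represents normal_letters_iff state nf_state_nf_word)
qed

section \<open>C is isomorphic to G1\<close>

fun C_to_G1 :: "genC \<Rightarrow> genG1 word" where
  "C_to_G1 Ca = [(A0, False)]"
| "C_to_G1 Cb = [(Bg, False)]"

fun G1_to_C :: "genG1 \<Rightarrow> genC word" where
  "G1_to_C A0 = [(Ca, False)]"
| "G1_to_C Am1 = [(Cb, True), (Ca, False), (Cb, False)]"
| "G1_to_C Am2 = [(Cb, True), (Cb, True), (Ca, False), (Cb, False), (Cb, False)]"
| "G1_to_C Bg = [(Cb, False)]"

text \<open>The relator (a b^{-3})^2 b^6 maps to a word with trivial normal form.\<close>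

lemma C_to_G1_relators: "\<forall>r\<in>relC. pres_eq relG1 (subst_word C_to_G1 r) []"
  by (simp add: relC_def pres_eq_G1_iff nf_state_def subst_letter_def)

text \<open>The third relation a_{-2} b = b a_0^{-1} becomes the conjugate of the relator of C by b a^{-1};
  the other two hold freely.\<close>

lemma G1_to_C_relators: "\<forall>r\<in>relG1. pres_eq relC (subst_word G1_to_C r) []"
proof -
  have "pres_eq relC (subst_word G1_to_C [(Am2, False), (Bg, False), (A0, False), (Bg, True)]) []"
    by (rule pres_eq_by_certificate[where L = "[([(Cb, False), (Ca, True)], False,
        [(Ca, False), (Cb, True), (Cb, True), (Cb, True), (Ca, False), (Cb, True), (Cb, True), (Cb, True),
         (Cb, False), (Cb, False), (Cb, False), (Cb, False), (Cb, False), (Cb, False)])]"])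
      (simp_all add: relC_def conj_relator_def subst_letter_def)
  then show ?thesis
    by (auto simp: relG1_def intro!: pres_eq_free) (simp_all add: subst_letter_def)
qed

theorem C_iso_G1:
  "\<exists>h \<in> iso grpC grpG1.
     h (word_class relC [(Ca, False)]) = word_class relG1 [(A0, False)]
   \<and> h (word_class relC [(Cb, False)]) = word_class relG1 [(Bg, False)]"
proof (rule bexI[of _ "induced_hom relC relG1 C_to_G1"])
  show "induced_hom relC relG1 C_to_G1 (word_class relC [(Ca, False)]) = word_class relG1 [(A0, False)]
      \<and> induced_hom relC relG1 C_to_G1 (word_class relC [(Cb, False)]) = word_class relG1 [(Bg, False)]"
    by (simp add: induced_hom_word_class[OF C_to_G1_relators] subst_letter_def)
  show "induced_hom relC relG1 C_to_G1 \<in> iso grpC grpG1"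
  proof (rule induced_hom_iso[OF C_to_G1_relators G1_to_C_relators])
    show "pres_eq relC (subst_word G1_to_C (C_to_G1 x)) [(x, False)]" for x
      by (cases x) (simp_all add: subst_letter_def)
    show "pres_eq relG1 (subst_word C_to_G1 (G1_to_C y)) [(y, False)]" for y
      by (cases y) (simp_all add: pres_eq_G1_iff nf_state_def subst_letter_def)
  qed
qed

section \<open>A normal form for G\<close>

abbreviation gx :: "genG \<times> bool" where "gx \<equiv> (Gx, False)"
abbreviation gx_inv :: "genG \<times> bool" where "gx_inv \<equiv> (Gx, True)"
abbreviation gy :: "genG \<times> bool" where "gy \<equiv> (Gy, False)"
abbreviation gy_inv :: "genG \<times> bool" where "gy_inv \<equiv> (Gy, True)"

lemma y_cubed: "pres_eq relG [gy, gy, gy] [gx_inv, gx_inv]"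
  by (rule pres_eq_by_certificate[where L = "[([gx_inv, gx_inv], False, [gx, gx, gy, gy, gy])]"])
    (simp_all add: relG_def conj_relator_def)

lemma y_inv_expand: "pres_eq relG [gy_inv] [gy, gy, gx, gx]"
  by (rule pres_eq_by_certificate[where L = "[([gy, gy], True, [gx, gx, gy, gy, gy])]"])
    (simp_all add: relG_def conj_relator_def)

lemma x_inv_expand: "pres_eq relG [gx_inv] [gx, gx_inv, gx_inv]"
  by (rule pres_eq_free) simp

text \<open>x^2 = y^{-3} commutes with x and with y, hence x^{\<pm>2} is central.\<close>

lemma x_squared_central: "pres_eq relG ([l] @ [gx, gx]) ([gx, gx] @ [l])"
proof -
  have y: "pres_eq relG ([gy] @ [gx, gx]) ([gx, gx] @ [gy])"
    by (rule pres_eq_by_certificate[where L = "[([gy], False, [gx, gx, gy, gy, gy]),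
        ([], True, [gx, gx, gy, gy, gy])]"]) (simp_all add: relG_def conj_relator_def)
  obtain g e where l: "l = (g, e)" by (cases l)
  show ?thesis
  proof (cases g)
    case Gx
    then show ?thesis using l by (cases e) (auto intro: pres_eq_free)
  next
    case Gy
    then show ?thesis using l y pres_eq_commute_inv[OF y] by (cases e) auto
  qed
qed

lemma x_inv_squared_central: "pres_eq relG ([l] @ [gx_inv, gx_inv]) ([gx_inv, gx_inv] @ [l])"
  using pres_eq_commute_inv[OF pres_eq_sym[OF x_squared_central[of l]]] by (simp add: pres_eq_sym)

lemma x_squared_central_word:
  "pres_eq relG (w @ [gx, gx]) ([gx, gx] @ w)"
  "pres_eq relG (w @ [gx_inv, gx_inv]) ([gx_inv, gx_inv] @ w)"
  using pres_eq_move_past[of w relG "[gx, gx]" "\<lambda>l. [l]"]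
    pres_eq_move_past[of w relG "[gx_inv, gx_inv]" "\<lambda>l. [l]"]
  by (simp_all add: x_squared_central[simplified] x_inv_squared_central[simplified])

text \<open>Normal-form words x^{2m} y^{e_k} x y^{e_{k-1}} ... x y^{e_0}, with the exponent list stored
  as [e_0, ..., e_k] (most recent syllable first); all e_i \<le> 2 and the inner ones nonzero.\<close>

fun y_syllables :: "nat list \<Rightarrow> genG word" where
  "y_syllables [] = []"
| "y_syllables [e] = replicate e gy"
| "y_syllables (e # e' # r) = y_syllables (e' # r) @ gx # replicate e gy"

fun inner_exps :: "nat list \<Rightarrow> bool" where
  "inner_exps [] = True"
| "inner_exps [e] = (e \<le> 2)"
| "inner_exps (e # e' # r) = (0 < e \<and> e \<le> 2 \<and> inner_exps (e' # r))"

fun valid_exps :: "nat list \<Rightarrow> bool" where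
  "valid_exps [] = False"
| "valid_exps (e # r) = (e \<le> 2 \<and> inner_exps r)"

lemma inner_exps_valid: "inner_exps (e # r) \<Longrightarrow> valid_exps (e # r)"
  by (cases r) auto

definition G_word :: "int \<times> nat list \<Rightarrow> genG word" where
  "G_word s = letter_power Gx (2 * fst s) @ y_syllables (snd s)"

lemma G_word_x_squared:
  "pres_eq relG (G_word (m, r) @ [gx, gx]) (G_word (m + 1, r))"
  "pres_eq relG (G_word (m, r) @ [gx_inv, gx_inv]) (G_word (m - 1, r))"
proof -
  have "G_word (m, r) @ [gx, gx] = letter_power Gx (2 * m) @ (y_syllables r @ [gx, gx])"
    by (simp add: G_word_def)
  also have "pres_eq relG \<dots> (letter_power Gx (2 * m) @ ([gx, gx] @ y_syllables r))"
    by (intro pres_eq_prefix x_squared_central_word)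
  also have "\<dots> = (letter_power Gx (2 * m) @ replicate 2 gx) @ y_syllables r"
    by (simp add: numeral_2_eq_2)
  also have "pres_eq relG \<dots> (letter_power Gx (2 * m + int 2) @ y_syllables r)"
    by (intro pres_eq_suffix letter_power_append)
  finally show "pres_eq relG (G_word (m, r) @ [gx, gx]) (G_word (m + 1, r))"
    by (simp add: G_word_def algebra_simps)
  have "G_word (m, r) @ [gx_inv, gx_inv] = letter_power Gx (2 * m) @ (y_syllables r @ [gx_inv, gx_inv])"
    by (simp add: G_word_def)
  also have "pres_eq relG \<dots> (letter_power Gx (2 * m) @ ([gx_inv, gx_inv] @ y_syllables r))"
    by (intro pres_eq_prefix x_squared_central_word)
  also have "\<dots> = (letter_power Gx (2 * m) @ replicate 2 gx_inv) @ y_syllables r"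
    by (simp add: numeral_2_eq_2)
  also have "pres_eq relG \<dots> (letter_power Gx (2 * m - int 2) @ y_syllables r)"
    by (intro pres_eq_suffix letter_power_append)
  finally show "pres_eq relG (G_word (m, r) @ [gx_inv, gx_inv]) (G_word (m - 1, r))"
    by (simp add: G_word_def algebra_simps)
qed

text \<open>The automaton for G.  Reading x after an empty syllable creates the central x^2; reading y
  a third time uses y^3 = x^{-2}; x^{-1} = x x^{-2} and y^{-1} = y^2 x^2 reduce to these.\<close>

fun read_x :: "int \<times> nat list \<Rightarrow> int \<times> nat list" where
  "read_x (m, []) = (m, [0])"
| "read_x (m, e # r) = (if e = 0 \<and> r \<noteq> [] then (m + 1, r) else (m, 0 # e # r))"

fun read_y :: "int \<times> nat list \<Rightarrow> int \<times> nat list" where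
  "read_y (m, []) = (m, [])"
| "read_y (m, e # r) = (if e < 2 then (m, Suc e # r) else (m - 1, 0 # r))"

fun G_step :: "int \<times> nat list \<Rightarrow> genG \<times> bool \<Rightarrow> int \<times> nat list" where
  "G_step s (Gx, e) = (if e then apfst (\<lambda>m. m - 1) (read_x s) else read_x s)"
| "G_step s (Gy, e) = (if e then apfst (\<lambda>m. m + 1) (read_y (read_y s)) else read_y s)"

definition G_state :: "genG word \<Rightarrow> int \<times> nat list" where
  "G_state w = foldl G_step (0, [0]) w"

lemma valid_exps_read:
  "valid_exps (snd s) \<Longrightarrow> valid_exps (snd (read_x s))"
  "valid_exps (snd s) \<Longrightarrow> valid_exps (snd (read_y s))"
proof -
  assume "valid_exps (snd s)"
  then obtain m e r where s: "s = (m, e # r)" "e \<le> 2" "inner_exps r"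
    by (cases s; cases "snd s") auto
  then show "valid_exps (snd (read_x s))" by (cases r; cases "tl r") auto
  show "valid_exps (snd (read_y s))" using s by auto
qed

lemma valid_exps_G_step:
  assumes "valid_exps (snd s)"
  shows "valid_exps (snd (G_step s l))"
proof (cases l)
  case (Pair g e)
  then show ?thesis using assms by (cases g) (simp_all add: valid_exps_read)
qed

lemma y_syllables_Suc: "y_syllables (Suc e # r) = y_syllables (e # r) @ [gy]"
  by (cases r) (simp_all add: replicate_append_same)

lemma read_x_sound:
  assumes "valid_exps (snd s)"
  shows "pres_eq relG (G_word s @ [gx]) (G_word (read_x s))"
proof -
  obtain m e r where s: "s = (m, e # r)"
    using assms by (cases s; cases "snd s") auto
  show ?thesis
  proof (cases "e = 0 \<and> r \<noteq> []")
    case True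
    then obtain e' r' where r: "r = e' # r'" by (cases r) auto
    have "G_word s @ [gx] = G_word (m, r) @ [gx, gx]" using s r True by (simp add: G_word_def)
    also have "pres_eq relG \<dots> (G_word (m + 1, r))" by (rule G_word_x_squared)
    finally show ?thesis using s True by simp
  next
    case False
    then show ?thesis using s by (cases r) (simp_all add: G_word_def)
  qed
qed

lemma read_y_sound:
  assumes "valid_exps (snd s)"
  shows "pres_eq relG (G_word s @ [gy]) (G_word (read_y s))"
proof -
  obtain m e r where s: "s = (m, e # r)" "e \<le> 2"
    using assms by (cases s; cases "snd s") auto
  show ?thesis
  proof (cases "e < 2")
    case True
    then show ?thesis using s by (simp add: G_word_def y_syllables_Suc)
  next
    case False
    then have e: "e = 2" using s by simp
    have "G_word s @ [gy] = G_word (m, 0 # r) @ [gy, gy, gy]"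
      using s e by (simp add: G_word_def numeral_2_eq_2 y_syllables_Suc)
    also have "pres_eq relG \<dots> (G_word (m, 0 # r) @ [gx_inv, gx_inv])"
      by (intro pres_eq_prefix y_cubed)
    also have "pres_eq relG \<dots> (G_word (m - 1, 0 # r))" by (rule G_word_x_squared)
    finally show ?thesis using s e by simp
  qed
qed

lemma G_step_sound:
  assumes valid: "valid_exps (snd s)"
  shows "pres_eq relG (G_word s @ [l]) (G_word (G_step s l))"
proof (cases l)
  case (Pair g e)
  show ?thesis
  proof (cases g)
  case Gx
  show ?thesis
  proof (cases e)
    case True
    have "pres_eq relG (G_word s @ [gx_inv]) ((G_word s @ [gx]) @ [gx_inv, gx_inv])"
      using pres_eq_prefix[OF x_inv_expand, of "G_word s"] by simp
    also have "pres_eq relG ((G_word s @ [gx]) @ [gx_inv, gx_inv]) (G_word (read_x s) @ [gx_inv, gx_inv])"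
      using read_x_sound[OF valid] by (rule pres_eq_suffix)
    also have "pres_eq relG \<dots> (G_word (apfst (\<lambda>m. m - 1) (read_x s)))"
      using G_word_x_squared(2)[of "fst (read_x s)" "snd (read_x s)"] by (cases "read_x s") simp
    finally show ?thesis using Pair Gx True by simp
  qed (use Pair Gx read_x_sound[OF valid] in simp)
next
  case Gy
  show ?thesis
  proof (cases e)
    case True
    have "pres_eq relG (G_word s @ [gy_inv]) ((G_word s @ [gy]) @ [gy] @ [gx, gx])"
      using pres_eq_prefix[OF y_inv_expand, of "G_word s"] by simp
    also have "pres_eq relG \<dots> ((G_word (read_y s) @ [gy]) @ [gx, gx])"
      using pres_eq_suffix[OF read_y_sound[OF valid], of "[gy] @ [gx, gx]"] by simp
    also have "pres_eq relG \<dots> (G_word (read_y (read_y s)) @ [gx, gx])"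
      using read_y_sound[OF valid_exps_read(2)[OF valid]] by (rule pres_eq_suffix)
    also have "pres_eq relG \<dots> (G_word (apfst (\<lambda>m. m + 1) (read_y (read_y s))))"
      using G_word_x_squared(1)[of "fst (read_y (read_y s))" "snd (read_y (read_y s))"]
      by (cases "read_y (read_y s)") simp
    finally show ?thesis using Pair Gy True by simp
  qed (use Pair Gy read_y_sound[OF valid] in simp)
  qed
qed

lemma G_state_sound: "pres_eq relG w (G_word (G_state w)) \<and> valid_exps (snd (G_state w))"
proof (induction w rule: rev_induct)
  case Nil
  then show ?case by (simp add: G_state_def G_word_def letter_power_def)
next
  case (snoc l w)
  have "pres_eq relG (w @ [l]) (G_word (G_state w) @ [l])"
    using snoc by (intro pres_eq_suffix) auto
  also have "pres_eq relG \<dots> (G_word (G_step (G_state w) l))"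
    using snoc G_step_sound by blast
  finally show ?case using snoc valid_exps_G_step by (simp add: G_state_def)
qed

section \<open>G embeds into C\<close>

fun G_to_C :: "genG \<Rightarrow> genC word" where
  "G_to_C Gx = [(Ca, False), (Cb, True), (Cb, True), (Cb, True)]"
| "G_to_C Gy = [(Cb, False), (Cb, False)]"

lemma G_to_C_relators: "\<forall>r\<in>relG. pres_eq relC (subst_word G_to_C r) []"
  by (auto simp: relG_def relC_def subst_letter_def intro!: pres_eq_relator)

definition G_to_G1 :: "genG \<Rightarrow> genG1 word" where
  "G_to_G1 g = subst_word C_to_G1 (G_to_C g)"

lemma subst_word_G_to_G1: "subst_word C_to_G1 (subst_word G_to_C w) = subst_word G_to_G1 w"
  by (simp add: subst_word_subst_word G_to_G1_def[abs_def])

lemma nf_state_G_to_G1_invariant: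
  "pres_eq relG u v \<Longrightarrow> nf_state (subst_word G_to_G1 u) = nf_state (subst_word G_to_G1 v)"
  using pres_eq_subst_word[OF C_to_G1_relators, OF pres_eq_subst_word[OF G_to_C_relators]]
  by (simp add: subst_word_G_to_G1 nf_state_invariant)

lemma nf_fold_offset:
  "foldl nf_step (n + d, w) u = (fst (foldl nf_step (n, w) u) + d, snd (foldl nf_step (n, w) u))"
proof (induction u arbitrary: n w)
  case (Cons l u)
  have "nf_step (n + d, w) l = (fst (nf_step (n, w) l) + d, snd (nf_step (n, w) l))"
    by (cases l rule: genG1_letter_cases) auto
  then show ?case using Cons[of "fst (nf_step (n, w) l)" "snd (nf_step (n, w) l)"] by simp
qed simp

text \<open>x^2 \<mapsto> (a_0 b^{-3})^2 = b^{-6}.\<close>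

lemma nf_fold_x_power: "foldl nf_step (n, []) (subst_word G_to_G1 (letter_power Gx (2 * m))) = (n - 6 * m, [])"
proof -
  have "foldl nf_step (n, []) (subst_word G_to_G1 (replicate (2 * k) (Gx, e)))
      = (if e then n + 6 * int k else n - 6 * int k, [])" for k n e
    by (induction k arbitrary: n) (auto simp: G_to_G1_def subst_letter_def algebra_simps)
  moreover have "nat (2 * m) = 2 * nat m" "nat (- (2 * m)) = 2 * nat (- m)" by auto
  ultimately show ?thesis by (simp add: letter_power_def)
qed

definition syllable_image :: "nat list \<Rightarrow> int \<times> genG1 word" where
  "syllable_image r = nf_state (subst_word G_to_G1 (y_syllables r))"

lemma nf_state_G_word:
  "nf_state (subst_word G_to_G1 (G_word (m, r))) = (fst (syllable_image r) - 6 * m, snd (syllable_image r))"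
proof -
  have "nf_state (subst_word G_to_G1 (G_word (m, r)))
      = foldl nf_step (0 + (- 6 * m), []) (subst_word G_to_G1 (y_syllables r))"
    by (simp add: nf_state_def G_word_def nf_fold_x_power)
  also have "\<dots> = (fst (syllable_image r) - 6 * m, snd (syllable_image r))"
    by (subst nf_fold_offset) (simp add: syllable_image_def nf_state_def)
  finally show ?thesis .
qed

text \<open>Reading the syllable x y^e = a_0 b^{2e-3} appends a_0 and then conjugates by b^{2e-3},
  which acts on the letters as twist e = shift^{2e-3}.\<close>

fun twist :: "nat \<Rightarrow> genG1 \<times> bool \<Rightarrow> genG1 \<times> bool" where
  "twist 0 = unshift \<circ> unshift \<circ> unshift"
| "twist (Suc 0) = unshift"
| "twist (Suc (Suc n)) = shift"

lemma le_2_cases: "e \<le> 2 \<Longrightarrow> e = 0 \<or> e = Suc 0 \<or> e = Suc (Suc 0)" for e :: nat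
  by arith

lemma twist_inj: "inj (twist e)"
  by (cases e rule: twist.cases) (simp_all add: inj_def)

lemma twist_a0: "e \<le> 2 \<Longrightarrow> e' \<le> 2 \<Longrightarrow> twist e (A0, False) = twist e' (A0, False) \<Longrightarrow> e = e'"
  using le_2_cases[of e] le_2_cases[of e'] by auto

lemma nf_fold_syllable:
  assumes "e \<le> 2" and "w = [] \<or> hd w \<noteq> (A0, True)"
  shows "foldl nf_step (n, w) (subst_word G_to_G1 (gx # replicate e gy))
    = (n + 2 * int e - 3, map (twist e) ((A0, False) # w))"
  using le_2_cases[OF assms(1)] cons_reduce_irreducible[of w "(A0, False)"] assms(2)
  by (auto simp: G_to_G1_def subst_letter_def)

lemma syllable_image_single: "e \<le> 2 \<Longrightarrow> syllable_image [e] = (2 * int e, [])"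
  using le_2_cases[of e] by (auto simp: syllable_image_def nf_state_def G_to_G1_def subst_letter_def)

lemma syllable_image_step:
  assumes "e \<le> 2" and "snd (syllable_image (e' # r)) = [] \<or> hd (snd (syllable_image (e' # r))) \<noteq> (A0, True)"
  shows "syllable_image (e # e' # r)
    = (fst (syllable_image (e' # r)) + 2 * int e - 3,
       map (twist e) ((A0, False) # snd (syllable_image (e' # r))))"
proof -
  have "syllable_image (e # e' # r)
      = foldl nf_step (fst (syllable_image (e' # r)), snd (syllable_image (e' # r)))
          (subst_word G_to_G1 (gx # replicate e gy))"
    by (simp add: syllable_image_def nf_state_def del: subst_word_simps(2))
  also have "\<dots> = (fst (syllable_image (e' # r)) + 2 * int e - 3,
       map (twist e) ((A0, False) # snd (syllable_image (e' # r))))"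
    by (rule nf_fold_syllable[OF assms])
  finally show ?thesis .
qed

text \<open>The images of the syllables are computed recursively; the condition on the head holds
  because an inner exponent is nonzero.\<close>

lemma syllable_image_Cons:
  "valid_exps (e # e' # r) \<Longrightarrow> syllable_image (e # e' # r)
    = (fst (syllable_image (e' # r)) + 2 * int e - 3,
       map (twist e) ((A0, False) # snd (syllable_image (e' # r))))"
proof (induction r arbitrary: e e')
  case Nil
  then show ?case by (intro syllable_image_step) (auto simp: syllable_image_single)
next
  case (Cons e'' r)
  then have valid: "valid_exps (e' # e'' # r)" and e: "e \<le> 2" and e': "0 < e'" "e' \<le> 2"
    by (auto intro: inner_exps_valid)
  have "hd (snd (syllable_image (e' # e'' # r))) \<noteq> (A0, True)"
    using Cons.IH[OF valid] e' le_2_cases[of e'] by auto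
  then show ?case by (intro syllable_image_step e) simp
qed

lemma length_syllable_image: "valid_exps r \<Longrightarrow> length (snd (syllable_image r)) = length r - 1"
proof (induction r)
  case (Cons e r)
  show ?case
  proof (cases "r = []")
    case True
    then show ?thesis using Cons.prems syllable_image_single by simp
  next
    case False
    then obtain e' r' where r: "r = e' # r'" by (cases r) auto
    have "valid_exps r" unfolding r by (rule inner_exps_valid) (use Cons.prems r in simp)
    then have "length (snd (syllable_image r)) = length r - 1" by (rule Cons.IH)
    moreover have "snd (syllable_image (e # r)) = map (twist e) ((A0, False) # snd (syllable_image r))"
      unfolding r using syllable_image_Cons[OF Cons.prems[unfolded r]] by simp
    ultimately show ?thesis using r by simp
  qed
qed simp

text \<open>The first letter of the image determines the last exponent, and twist e is injective.\<close>

lemma syllable_image_Cons_inj: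
  assumes valid: "valid_exps (e # e1 # r1)" "valid_exps (e' # e1' # r1')"
    and eq: "snd (syllable_image (e # e1 # r1)) = snd (syllable_image (e' # e1' # r1'))"
  shows "e = e' \<and> snd (syllable_image (e1 # r1)) = snd (syllable_image (e1' # r1'))"
proof -
  have "map (twist e) ((A0, False) # snd (syllable_image (e1 # r1)))
      = map (twist e') ((A0, False) # snd (syllable_image (e1' # r1')))"
    using eq unfolding syllable_image_Cons[OF valid(1)] syllable_image_Cons[OF valid(2)] by simp
  then have head: "twist e (A0, False) = twist e' (A0, False)"
    and tail: "map (twist e) (snd (syllable_image (e1 # r1))) = map (twist e') (snd (syllable_image (e1' # r1')))"
    by simp_all
  have "e = e'" using twist_a0[OF _ _ head] valid by simp
  then show ?thesis using tail inj_map_eq_map[OF twist_inj] by simp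
qed

lemma syllable_image_inj:
  assumes "valid_exps r" "valid_exps r'"
    and "fst (syllable_image r) - 6 * m = fst (syllable_image r') - 6 * m'"
    and "snd (syllable_image r) = snd (syllable_image r')"
  shows "m = m' \<and> r = r'"
  using assms
proof (induction r arbitrary: r' m m')
  case (Cons e r)
  show ?case
  proof (cases "r = []")
    case True
    then have "length r' = 1"
      using Cons.prems length_syllable_image[of r'] syllable_image_single[of e] by (cases r') auto
    then obtain e' where r': "r' = [e']" by (cases r') auto
    have "2 * int e - 6 * m = 2 * int e' - 6 * m'" "e \<le> 2" "e' \<le> 2"
      using Cons.prems True r' syllable_image_single[of e] syllable_image_single[of e'] by auto
    then have "m = m' \<and> e = e'" by presburger
    then show ?thesis using True r' by simp
  next
    case False
    then obtain e1 r1 where r: "r = e1 # r1" by (cases r) auto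
    have "length r' \<ge> 2"
      using Cons.prems r length_syllable_image[of "e # r"] length_syllable_image[of r'] by auto
    then obtain e' e1' r1' where r': "r' = e' # e1' # r1'" by (cases r'; cases "tl r'") auto
    have valid: "valid_exps (e # e1 # r1)" "valid_exps (e' # e1' # r1')"
      using Cons.prems r r' by simp_all
    have valid_tails: "valid_exps (e1 # r1)" "valid_exps (e1' # r1')"
      by (rule inner_exps_valid, use valid in simp)+
    obtain e_eq: "e = e'" and snd_eq: "snd (syllable_image (e1 # r1)) = snd (syllable_image (e1' # r1'))"
      using syllable_image_Cons_inj[OF valid] Cons.prems r r' by auto
    have "fst (syllable_image (e1 # r1)) - 6 * m = fst (syllable_image (e1' # r1')) - 6 * m'"
      using Cons.prems(3) e_eq unfolding r r' syllable_image_Cons[OF valid(1)] syllable_image_Cons[OF valid(2)]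
      by simp
    then have "m = m' \<and> r = e1' # r1'"
      using Cons.IH[OF valid_tails(1)[folded r] valid_tails(2)] snd_eq r by simp
    then show ?thesis using r' e_eq by simp
  qed
qed simp

lemma G_to_G1_faithful:
  assumes "pres_eq relG1 (subst_word G_to_G1 u) (subst_word G_to_G1 v)"
  shows "pres_eq relG u v"
proof -
  have image: "nf_state (subst_word G_to_G1 w) = (fst (syllable_image (snd (G_state w))) - 6 * fst (G_state w),
      snd (syllable_image (snd (G_state w))))" for w
    using nf_state_G_to_G1_invariant[OF conjunct1[OF G_state_sound[of w]]]
      nf_state_G_word[of "fst (G_state w)" "snd (G_state w)"] by simp
  have "nf_state (subst_word G_to_G1 u) = nf_state (subst_word G_to_G1 v)"
    using assms by (rule nf_state_invariant)
  then have "fst (G_state u) = fst (G_state v) \<and> snd (G_state u) = snd (G_state v)"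
    using syllable_image_inj[of "snd (G_state u)" "snd (G_state v)" "fst (G_state u)" "fst (G_state v)"]
      G_state_sound[of u] G_state_sound[of v]
    unfolding image by simp
  then have "G_state u = G_state v" by (simp add: prod_eq_iff)
  then show ?thesis using G_state_sound[of u] G_state_sound[of v] by (metis pres_eq_sym pres_eq_trans)
qed

theorem G_embeds_in_C:
  "\<exists>h \<in> hom grpG grpC.
     h (word_class relG [(Gx, False)]) = word_class relC [(Ca, False), (Cb, True), (Cb, True), (Cb, True)]
   \<and> h (word_class relG [(Gy, False)]) = word_class relC [(Cb, False), (Cb, False)]
   \<and> inj_on h (carrier grpG)"
proof (rule bexI[of _ "induced_hom relG relC G_to_C"], intro conjI)
  show "induced_hom relG relC G_to_C \<in> hom grpG grpC"
    by (rule induced_hom_hom[OF G_to_C_relators])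
  show "induced_hom relG relC G_to_C (word_class relG [(Gx, False)])
      = word_class relC [(Ca, False), (Cb, True), (Cb, True), (Cb, True)]"
    "induced_hom relG relC G_to_C (word_class relG [(Gy, False)]) = word_class relC [(Cb, False), (Cb, False)]"
    by (simp_all add: induced_hom_word_class[OF G_to_C_relators] subst_letter_def)
  show "inj_on (induced_hom relG relC G_to_C) (carrier grpG)"
  proof (rule inj_onI)
    fix P Q
    assume "P \<in> carrier grpG" "Q \<in> carrier grpG"
      and eq: "induced_hom relG relC G_to_C P = induced_hom relG relC G_to_C Q"
    then obtain u v where P: "P = word_class relG u" and Q: "Q = word_class relG v"
      by (auto elim!: carrier_presented_group_cases)
    have "pres_eq relC (subst_word G_to_C u) (subst_word G_to_C v)"
      using eq by (simp add: P Q induced_hom_word_class[OF G_to_C_relators] word_class_eq)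
    then have "pres_eq relG1 (subst_word G_to_G1 u) (subst_word G_to_G1 v)"
      unfolding subst_word_G_to_G1[symmetric] by (rule pres_eq_subst_word[OF C_to_G1_relators])
    then show "P = Q" by (simp add: P Q word_class_eq G_to_G1_faithful)
  qed
qed

theorem mainTheorem4:
  shows "(\<exists>h \<in> hom grpG grpC.
            h (word_class relG [(Gx, False)]) = word_class relC [(Ca, False), (Cb, True), (Cb, True), (Cb, True)]
          \<and> h (word_class relG [(Gy, False)]) = word_class relC [(Cb, False), (Cb, False)]
          \<and> inj_on h (carrier grpG))
       \<and> (\<exists>h \<in> iso grpC grpG1.
            h (word_class relC [(Ca, False)]) = word_class relG1 [(A0, False)]
          \<and> h (word_class relC [(Cb, False)]) = word_class relG1 [(Bg, False)])
       \<and> (\<forall>g \<in> carrier grpG1. \<exists>!(n, as). normal_letters as \<and>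
            g = (word_class relG1 [(Bg, False)]) [^]\<^bsub>grpG1\<^esub> (n::int) \<otimes>\<^bsub>grpG1\<^esub> letters_prod as)"
  using G_embeds_in_C C_iso_G1 G1_normal_form by blast

end
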